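(* Let $\mathcal{X}$ be a probability distribution over a set of queries (the set is also denoted $\mathcal{X}$), let $k \geq 1$, and let $\hat q_1,\dots,\hat q_k,\hat c_1,\dots,\hat c_k : \mathcal{X} \to \mathbb{R}$ be integrable functions (quality and cost estimates of $k$ models). Let $B \in \mathbb{R}$ and assume there is at least one routing strategy $s$ with $C(s) \leqslant B$. Assume moreover that the set $\Lambda$ is finite. Then: (i) if some routing strategy $s \in S_0$ satisfies $C(s) \leqslant B$, then $s$ maximizes $Q$ over all routing strategies $s'$ with $C(s') \leqslant B$; (ii) otherwise, there exists $\lambda^* \in \mathbb{R}^+$ such that $S_{\lambda^*}$ contains a routing strategy with cost exactly $B$, and every routing strategy $s \in \bigcup_{\lambda \in \mathbb{R}^+} S_\lambda$ with $C(s) = B$ maximizes $Q$ over all routing strategies $s'$ with $C(s') \leqslant B$ (in particular all such strategies achieve the same optimal quality).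
   Context: A routing strategy is a measurable function $s : \mathcal{X} \to \mathbb{R}^k$ with $s_i(x) \geq 0$ for all $i$ and $\sum_{i=1}^k s_i(x) = 1$ for all $x \in \mathcal{X}$ ($s_i(x)$ is the probability of sending query $x$ to model $i$). Its expected quality is $Q(s) = \mathbb{E}_{x \sim \mathcal{X}}\left[\sum_{i=1}^k s_i(x)\hat q_i(x)\right]$ and its expected cost is $C(s) = \mathbb{E}_{x \sim \mathcal{X}}\left[\sum_{i=1}^k s_i(x)\hat c_i(x)\right]$. For $\lambda \in \mathbb{R}^+$ (nonnegative reals), $S_\lambda$ denotes the set of routing strategies $s$ such that for all $x \in \mathcal{X}$ and all $i \in \{1,\dots,k\}$: if $\hat q_i(x) - \lambda \hat c_i(x) < \max_j \left(\hat q_j(x) - \lambda \hat c_j(x)\right)$ then $s_i(x) = 0$. $\Lambda$ denotes the set of $\lambda \in \mathbb{R}$ for which there exist $x \in \mathcal{X}$ and $i \neq j$ with $\hat q_i(x) - \lambda \hat c_i(x) = \hat q_j(x) - \lambda \hat c_j(x)$. *)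

theory Defs
  imports "HOL-Probability.Probability"
begin

text \<open>Models are indexed by 0..<k. A routing strategy is given componentwise:
  s i x is the probability of sending query x to model i.\<close>

definition routing :: "'a measure \<Rightarrow> nat \<Rightarrow> (nat \<Rightarrow> 'a \<Rightarrow> real) \<Rightarrow> bool" where
  "routing M k s \<longleftrightarrow> (\<forall>i<k. s i \<in> borel_measurable M) \<and>
     (\<forall>x\<in>space M. (\<forall>i<k. 0 \<le> s i x) \<and> (\<Sum>i<k. s i x) = 1)"

definition expQ :: "'a measure \<Rightarrow> nat \<Rightarrow> (nat \<Rightarrow> 'a \<Rightarrow> real) \<Rightarrow> (nat \<Rightarrow> 'a \<Rightarrow> real) \<Rightarrow> real" where
  "expQ M k q s = (\<integral>x. (\<Sum>i<k. s i x * q i x) \<partial>M)"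

definition expC :: "'a measure \<Rightarrow> nat \<Rightarrow> (nat \<Rightarrow> 'a \<Rightarrow> real) \<Rightarrow> (nat \<Rightarrow> 'a \<Rightarrow> real) \<Rightarrow> real" where
  "expC M k c s = (\<integral>x. (\<Sum>i<k. s i x * c i x) \<partial>M)"

definition S_lam :: "'a measure \<Rightarrow> nat \<Rightarrow> (nat \<Rightarrow> 'a \<Rightarrow> real) \<Rightarrow> (nat \<Rightarrow> 'a \<Rightarrow> real)
    \<Rightarrow> real \<Rightarrow> (nat \<Rightarrow> 'a \<Rightarrow> real) set" where
  "S_lam M k q c l = {s. routing M k s \<and>
     (\<forall>x\<in>space M. \<forall>i<k. q i x - l * c i x < Max ((\<lambda>j. q j x - l * c j x) ` {..<k}) \<longrightarrow> s i x = 0)}"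

definition Lam :: "'a measure \<Rightarrow> nat \<Rightarrow> (nat \<Rightarrow> 'a \<Rightarrow> real) \<Rightarrow> (nat \<Rightarrow> 'a \<Rightarrow> real) \<Rightarrow> real set" where
  "Lam M k q c = {l. \<exists>x\<in>space M. \<exists>i<k. \<exists>j<k. i \<noteq> j \<and> q i x - l * c i x = q j x - l * c j x}"

end

theory Submission
  imports Defs
begin

(* For every l, a strategy in S_lam l maximizes the Lagrangian Q - l C pointwise, hence over
   all routing strategies; so it beats every strategy s' with l C(s') \<le> l C(s), which covers
   both l = 0 and C(s) = B.
   For existence, let a be the largest point of {0} \<union> (Lam \<inter> (0,\<infinity>)) at which some strategy of
   S_lam a costs at least B. The greedy strategy (least index of maximal score) at any point
   strictly between a and the next point b of Lam stays greedy on the whole of [a, b], so it lies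
   in S_lam a and in S_lam b and costs less than B by maximality of a; if there is no such b,
   the greedy strategy to the right of a routes every query to a cheapest model and costs at
   most the cost of a feasible strategy. Since S_lam a is convex and C is affine, a mixture of
   the two strategies costs exactly B. *)

abbreviation max_score :: "nat \<Rightarrow> (nat \<Rightarrow> 'a \<Rightarrow> real) \<Rightarrow> (nat \<Rightarrow> 'a \<Rightarrow> real) \<Rightarrow> real \<Rightarrow> 'a \<Rightarrow> real"
  where "max_score k q c l x \<equiv> Max ((\<lambda>j. q j x - l * c j x) ` {..<k})"

lemma max_score_ge: "i < k \<Longrightarrow> q i x - l * c i x \<le> max_score k q c l x"
  by (intro Max_ge) auto

lemma tie_in_Lam:
  assumes "x \<in> space M" "i < k" "j < k" "i \<noteq> j" "c i x \<noteq> c j x"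
  shows "(q i x - q j x) / (c i x - c j x) \<in> Lam M k q c"
proof -
  let ?\<mu> = "(q i x - q j x) / (c i x - c j x)"
  have "q i x - ?\<mu> * c i x = q j x - ?\<mu> * c j x"
    using assms(5) by (simp add: field_simps)
  then show ?thesis
    unfolding Lam_def using assms(1-4) by blast
qed

lemma affine_root_between:
  fixes \<alpha> \<delta> m l :: real
  assumes "\<alpha> - m * \<delta> > 0" "\<alpha> - l * \<delta> < 0"
  shows "min m l < \<alpha> / \<delta> \<and> \<alpha> / \<delta> < max m l"
proof (cases "\<delta> > 0")
  case True
  then have "m < \<alpha> / \<delta>" "\<alpha> / \<delta> < l" using assms by (simp_all add: field_simps)
  then show ?thesis by linarith
next
  case False
  then have "\<delta> < 0" using assms by (cases "\<delta> = 0") auto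
  then have "l < \<alpha> / \<delta>" "\<alpha> / \<delta> < m" using assms by (simp_all add: field_simps)
  then show ?thesis by linarith
qed

lemma routing_nonneg: "routing M k s \<Longrightarrow> x \<in> space M \<Longrightarrow> i < k \<Longrightarrow> 0 \<le> s i x"
  unfolding routing_def by blast

lemma routing_le_one:
  assumes "routing M k s" "x \<in> space M" "i < k"
  shows "s i x \<le> 1"
proof -
  have "s i x \<le> (\<Sum>j<k. s j x)"
    using assms by (intro member_le_sum) (auto intro: routing_nonneg)
  also have "\<dots> = 1"
    using assms unfolding routing_def by blast
  finally show ?thesis .
qed

lemma routing_sum_const: "routing M k s \<Longrightarrow> x \<in> space M \<Longrightarrow> (\<Sum>i<k. s i x * a) = a"
  unfolding routing_def by (simp add: sum_distrib_right[symmetric])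

lemma integrable_routing_sum:
  assumes "routing M k s" "\<And>i. i < k \<Longrightarrow> integrable M (f i)"
  shows "integrable M (\<lambda>x. \<Sum>i<k. s i x * f i x)"
proof (rule Bochner_Integration.integrable_sum)
  fix i assume "i \<in> {..<k}"
  then have i: "i < k" by simp
  have [measurable]: "s i \<in> borel_measurable M"
    using assms(1) i unfolding routing_def by blast
  show "integrable M (\<lambda>x. s i x * f i x)"
  proof (rule Bochner_Integration.integrable_bound[OF assms(2)[OF i]])
    show "(\<lambda>x. s i x * f i x) \<in> borel_measurable M"
      using assms(2)[OF i] by measurable
    show "AE x in M. norm (s i x * f i x) \<le> norm (f i x)"
      using routing_nonneg[OF assms(1) _ i] routing_le_one[OF assms(1) _ i]
      by (intro AE_I2) (simp add: abs_mult mult_left_le_one_le)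
  qed
qed

lemma expQ_minus_expC:
  assumes "routing M k s" "\<forall>i<k. integrable M (q i)" "\<forall>i<k. integrable M (c i)"
  shows "expQ M k q s - l * expC M k c s = (\<integral>x. (\<Sum>i<k. s i x * (q i x - l * c i x)) \<partial>M)"
proof -
  have "expQ M k q s - l * expC M k c s =
      (\<integral>x. (\<Sum>i<k. s i x * q i x) - l * (\<Sum>i<k. s i x * c i x) \<partial>M)"
    unfolding expQ_def expC_def using assms by (simp add: integrable_routing_sum)
  also have "\<dots> = (\<integral>x. (\<Sum>i<k. s i x * (q i x - l * c i x)) \<partial>M)"
    by (simp add: sum_distrib_left sum_subtractf[symmetric] algebra_simps)
  finally show ?thesis .
qed

lemma routing_score_le_max_score:
  assumes "routing M k s" "x \<in> space M"
  shows "(\<Sum>i<k. s i x * (q i x - l * c i x)) \<le> max_score k q c l x"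
proof -
  have "(\<Sum>i<k. s i x * (q i x - l * c i x)) \<le> (\<Sum>i<k. s i x * max_score k q c l x)"
    using assms by (intro sum_mono mult_left_mono max_score_ge) (auto intro: routing_nonneg)
  also have "\<dots> = max_score k q c l x"
    using routing_sum_const[OF assms] .
  finally show ?thesis .
qed

lemma S_lam_score_eq_max_score:
  assumes "s \<in> S_lam M k q c l" "x \<in> space M"
  shows "(\<Sum>i<k. s i x * (q i x - l * c i x)) = max_score k q c l x"
proof -
  have "(\<Sum>i<k. s i x * (q i x - l * c i x)) = (\<Sum>i<k. s i x * max_score k q c l x)"
  proof (rule sum.cong)
    fix i assume "i \<in> {..<k}"
    then have "q i x - l * c i x < max_score k q c l x \<longrightarrow> s i x = 0"
      using assms unfolding S_lam_def by blast
    moreover have "q i x - l * c i x \<le> max_score k q c l x"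
      using \<open>i \<in> {..<k}\<close> by (simp add: max_score_ge)
    ultimately have "q i x - l * c i x = max_score k q c l x \<or> s i x = 0"
      by linarith
    then show "s i x * (q i x - l * c i x) = s i x * max_score k q c l x" by auto
  qed simp
  also have "\<dots> = max_score k q c l x"
    using assms by (intro routing_sum_const) (auto simp: S_lam_def)
  finally show ?thesis .
qed

lemma S_lam_maximizes_lagrangian:
  assumes "s \<in> S_lam M k q c l" "routing M k s'"
    and "\<forall>i<k. integrable M (q i)" "\<forall>i<k. integrable M (c i)"
  shows "expQ M k q s' - l * expC M k c s' \<le> expQ M k q s - l * expC M k c s"
proof -
  have s: "routing M k s"
    using assms(1) unfolding S_lam_def by blast
  have score_integrable: "integrable M (\<lambda>x. \<Sum>i<k. t i x * (q i x - l * c i x))"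
    if "routing M k t" for t
    using that assms(3,4) by (intro integrable_routing_sum) auto
  have "(\<integral>x. (\<Sum>i<k. s' i x * (q i x - l * c i x)) \<partial>M)
      \<le> (\<integral>x. (\<Sum>i<k. s i x * (q i x - l * c i x)) \<partial>M)"
    using score_integrable[OF assms(2)] score_integrable[OF s]
    by (rule integral_mono)
      (simp add: routing_score_le_max_score[OF assms(2)] S_lam_score_eq_max_score[OF assms(1)])
  then show ?thesis
    unfolding expQ_minus_expC[OF assms(2-4)] expQ_minus_expC[OF s assms(3,4)] .
qed

lemma S_lam_optimal:
  assumes "s \<in> S_lam M k q c l" "routing M k s'" "l * expC M k c s' \<le> l * expC M k c s"
    and "\<forall>i<k. integrable M (q i)" "\<forall>i<k. integrable M (c i)"
  shows "expQ M k q s' \<le> expQ M k q s"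
  using S_lam_maximizes_lagrangian[OF assms(1,2,4,5)] assms(3) by linarith

definition greedy_index :: "nat \<Rightarrow> (nat \<Rightarrow> 'a \<Rightarrow> real) \<Rightarrow> (nat \<Rightarrow> 'a \<Rightarrow> real) \<Rightarrow> real \<Rightarrow> 'a \<Rightarrow> nat"
  where "greedy_index k q c l x = (LEAST i. i < k \<and> q i x - l * c i x = max_score k q c l x)"

definition greedy :: "nat \<Rightarrow> (nat \<Rightarrow> 'a \<Rightarrow> real) \<Rightarrow> (nat \<Rightarrow> 'a \<Rightarrow> real) \<Rightarrow> real \<Rightarrow> nat \<Rightarrow> 'a \<Rightarrow> real"
  where "greedy k q c l i x = (if i = greedy_index k q c l x then 1 else 0)"

lemma
  assumes "k \<ge> 1"
  shows greedy_index_less: "greedy_index k q c l x < k"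
    and greedy_index_score:
      "q (greedy_index k q c l x) x - l * c (greedy_index k q c l x) x = max_score k q c l x"
proof -
  let ?P = "\<lambda>i. i < k \<and> q i x - l * c i x = max_score k q c l x"
  have "max_score k q c l x \<in> (\<lambda>j. q j x - l * c j x) ` {..<k}"
    using assms by (intro Max_in) (auto simp: lessThan_empty_iff)
  then obtain i where "?P i" by auto
  then have "?P (greedy_index k q c l x)"
    unfolding greedy_index_def by (rule LeastI)
  then show "greedy_index k q c l x < k"
    "q (greedy_index k q c l x) x - l * c (greedy_index k q c l x) x = max_score k q c l x"
    by auto
qed

lemma sum_greedy:
  assumes "k \<ge> 1"
  shows "(\<Sum>i<k. greedy k q c l i x * f i x) = f (greedy_index k q c l x) x"
proof -
  have "(\<Sum>i<k. greedy k q c l i x * f i x) = (\<Sum>i<k. if i = greedy_index k q c l x then f i x else 0)"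
    unfolding greedy_def by (intro sum.cong) auto
  also have "\<dots> = f (greedy_index k q c l x) x"
    by (simp add: sum.delta' greedy_index_less[OF assms])
  finally show ?thesis .
qed

lemma greedy_measurable:
  assumes "\<forall>i<k. q i \<in> borel_measurable M" "\<forall>i<k. c i \<in> borel_measurable M"
  shows "greedy k q c l i \<in> borel_measurable M"
proof -
  have [measurable]: "(\<lambda>x. max_score k q c l x) \<in> borel_measurable M"
  proof (rule borel_measurable_Max)
    fix j assume "j \<in> {..<k}"
    then have [measurable]: "q j \<in> borel_measurable M" "c j \<in> borel_measurable M"
      using assms by auto
    show "(\<lambda>x. q j x - l * c j x) \<in> borel_measurable M" by measurable
  qed simp
  have "(\<lambda>x. j < k \<and> q j x - l * c j x = max_score k q c l x) \<in> measurable M (count_space UNIV)"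
    for j
  proof (cases "j < k")
    case True
    then have [measurable]: "q j \<in> borel_measurable M" "c j \<in> borel_measurable M"
      using assms by auto
    show ?thesis by measurable
  qed simp
  then have "greedy_index k q c l \<in> measurable M (count_space UNIV)"
    unfolding greedy_index_def by (rule measurable_Least)
  then show ?thesis
    unfolding greedy_def by measurable
qed

lemma greedy_routing:
  assumes "k \<ge> 1" "\<forall>i<k. q i \<in> borel_measurable M" "\<forall>i<k. c i \<in> borel_measurable M"
  shows "routing M k (greedy k q c l)"
proof -
  have "(\<Sum>i<k. greedy k q c l i x) = 1" for x
    using sum_greedy[OF assms(1), of q c l x "\<lambda>_ _. 1"] by simp
  then show ?thesis
    using greedy_measurable[OF assms(2,3)] unfolding routing_def by (simp add: greedy_def)
qed

lemma greedy_in_S_lamI: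
  assumes "routing M k (greedy k q c m)"
    and "\<And>x. x \<in> space M \<Longrightarrow>
      q (greedy_index k q c m x) x - l * c (greedy_index k q c m x) x = max_score k q c l x"
  shows "greedy k q c m \<in> S_lam M k q c l"
  using assms unfolding S_lam_def greedy_def by auto

lemma greedy_in_S_lam:
  assumes "k \<ge> 1" "\<forall>i<k. q i \<in> borel_measurable M" "\<forall>i<k. c i \<in> borel_measurable M"
  shows "greedy k q c l \<in> S_lam M k q c l"
  using assms by (intro greedy_in_S_lamI greedy_routing greedy_index_score)

(* If the greedy model at m lost to some j at l, their scores would tie strictly between m and l. *)
lemma greedy_index_score_Lam_free:
  assumes "k \<ge> 1" "x \<in> space M" "{a<..<b} \<inter> Lam M k q c = {}"
    and "a < m" "m < b" "a \<le> l" "l \<le> b"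
  shows "q (greedy_index k q c m x) x - l * c (greedy_index k q c m x) x = max_score k q c l x"
proof -
  let ?i = "greedy_index k q c m x"
  have i: "?i < k" "q ?i x - m * c ?i x = max_score k q c m x"
    by (fact greedy_index_less[OF assms(1)], fact greedy_index_score[OF assms(1)])
  have "q j x - l * c j x \<le> q ?i x - l * c ?i x" if j: "j < k" "j \<noteq> ?i" for j
  proof (rule ccontr)
    assume "\<not> ?thesis"
    then have at_l: "(q ?i x - q j x) - l * (c ?i x - c j x) < 0"
      by (simp add: algebra_simps)
    have "m \<notin> Lam M k q c"
      using assms(3-5) by auto
    then have "q j x - m * c j x \<noteq> q ?i x - m * c ?i x"
      using assms(2) i(1) j unfolding Lam_def by blast
    moreover have "q j x - m * c j x \<le> q ?i x - m * c ?i x"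
      using i(2) max_score_ge[OF j(1)] by simp
    ultimately have at_m: "(q ?i x - q j x) - m * (c ?i x - c j x) > 0"
      by (simp add: algebra_simps)
    have "c ?i x \<noteq> c j x"
      using at_l at_m by auto
    then have "(q ?i x - q j x) / (c ?i x - c j x) \<in> Lam M k q c"
      using tie_in_Lam assms(2) i(1) j by metis
    moreover have "(q ?i x - q j x) / (c ?i x - c j x) \<in> {a<..<b}"
      using affine_root_between[OF at_m at_l] assms(4-7) by auto
    ultimately show False
      using assms(3) by blast
  qed
  then show ?thesis
    using i(1) by (intro antisym max_score_ge Max.boundedI) auto
qed

lemma greedy_in_S_lam_Lam_free:
  assumes "k \<ge> 1" "\<forall>i<k. q i \<in> borel_measurable M" "\<forall>i<k. c i \<in> borel_measurable M"
    and "{a<..<b} \<inter> Lam M k q c = {}" "a < m" "m < b" "a \<le> l" "l \<le> b"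
  shows "greedy k q c m \<in> S_lam M k q c l"
  using assms by (intro greedy_in_S_lamI greedy_routing greedy_index_score_Lam_free) auto

(* Beyond all points of Lam the greedy choice picks a cheapest model: a more expensive model j
   with at least the same score at m would tie with it at some point \<ge> m. *)
lemma greedy_index_min_cost:
  assumes "k \<ge> 1" "x \<in> space M" "{a<..} \<inter> Lam M k q c = {}" "a < m" "j < k"
  shows "c (greedy_index k q c m x) x \<le> c j x"
proof (rule ccontr)
  let ?i = "greedy_index k q c m x"
  assume "\<not> ?thesis"
  then have "c ?i x \<noteq> c j x" and pos: "c ?i x - c j x > 0"
    by auto
  then have "?i \<noteq> j"
    by auto
  then have tie: "(q ?i x - q j x) / (c ?i x - c j x) \<in> Lam M k q c"
    using tie_in_Lam[OF assms(2) greedy_index_less[OF assms(1), of q c m x] assms(5)]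
      \<open>c ?i x \<noteq> c j x\<close> by blast
  have "q j x - m * c j x \<le> q ?i x - m * c ?i x"
    using greedy_index_score[OF assms(1), where q = q and c = c and l = m and x = x]
      max_score_ge[OF assms(5), where q = q and c = c and l = m and x = x] by simp
  then have "m \<le> (q ?i x - q j x) / (c ?i x - c j x)"
    using pos by (simp add: field_simps)
  then have "(q ?i x - q j x) / (c ?i x - c j x) \<in> {a<..}"
    using assms(4) by simp
  then show False
    using tie assms(3) by blast
qed

lemma expC_greedy_le:
  assumes "k \<ge> 1" "\<forall>i<k. q i \<in> borel_measurable M" "\<forall>i<k. integrable M (c i)"
    and "{a<..} \<inter> Lam M k q c = {}" "a < m" "routing M k s"
  shows "expC M k c (greedy k q c m) \<le> expC M k c s"
  unfolding expC_def
proof (rule integral_mono)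
  have "routing M k (greedy k q c m)"
    using assms(1-3) by (intro greedy_routing) auto
  then show "integrable M (\<lambda>x. \<Sum>i<k. greedy k q c m i x * c i x)"
    using assms(3) by (intro integrable_routing_sum) auto
  show "integrable M (\<lambda>x. \<Sum>i<k. s i x * c i x)"
    using assms(3,6) by (intro integrable_routing_sum) auto
  fix x assume x: "x \<in> space M"
  have "(\<Sum>i<k. greedy k q c m i x * c i x) = (\<Sum>i<k. s i x * c (greedy_index k q c m x) x)"
    unfolding sum_greedy[OF assms(1)] routing_sum_const[OF assms(6) x] ..
  also have "\<dots> \<le> (\<Sum>i<k. s i x * c i x)"
    using assms x
    by (intro sum_mono mult_left_mono greedy_index_min_cost) (auto intro: routing_nonneg)
  finally show "(\<Sum>i<k. greedy k q c m i x * c i x) \<le> (\<Sum>i<k. s i x * c i x)" .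
qed

lemma routing_convex:
  assumes "routing M k s1" "routing M k s2" "0 \<le> t" "t \<le> 1"
  shows "routing M k (\<lambda>i x. t * s1 i x + (1 - t) * s2 i x)"
  unfolding routing_def
proof (intro conjI allI impI ballI)
  fix i assume "i < k"
  then have [measurable]: "s1 i \<in> borel_measurable M" "s2 i \<in> borel_measurable M"
    using assms(1,2) unfolding routing_def by auto
  show "(\<lambda>x. t * s1 i x + (1 - t) * s2 i x) \<in> borel_measurable M"
    by measurable
next
  fix x i assume "x \<in> space M" "i < k"
  then show "0 \<le> t * s1 i x + (1 - t) * s2 i x"
    using routing_nonneg[OF assms(1)] routing_nonneg[OF assms(2)] assms(3,4) by auto
next
  fix x assume "x \<in> space M"
  then show "(\<Sum>i<k. t * s1 i x + (1 - t) * s2 i x) = 1"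
    using assms(1,2) unfolding routing_def by (simp add: sum.distrib sum_distrib_left[symmetric])
qed

lemma S_lam_convex:
  assumes "s1 \<in> S_lam M k q c l" "s2 \<in> S_lam M k q c l" "0 \<le> t" "t \<le> 1"
  shows "(\<lambda>i x. t * s1 i x + (1 - t) * s2 i x) \<in> S_lam M k q c l"
  using assms routing_convex[of M k s1 s2 t] unfolding S_lam_def by auto

lemma expC_convex:
  assumes "routing M k s1" "routing M k s2" "\<forall>i<k. integrable M (c i)"
  shows "expC M k c (\<lambda>i x. t * s1 i x + (1 - t) * s2 i x)
    = t * expC M k c s1 + (1 - t) * expC M k c s2"
proof -
  have "expC M k c (\<lambda>i x. t * s1 i x + (1 - t) * s2 i x) =
      (\<integral>x. t * (\<Sum>i<k. s1 i x * c i x) + (1 - t) * (\<Sum>i<k. s2 i x * c i x) \<partial>M)"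
    unfolding expC_def
    by (simp add: sum_distrib_left sum.distrib[symmetric] algebra_simps)
  also have "\<dots> = t * expC M k c s1 + (1 - t) * expC M k c s2"
    unfolding expC_def using assms by (simp add: integrable_routing_sum)
  finally show ?thesis .
qed

lemma S_lam_intermediate_cost:
  assumes "s1 \<in> S_lam M k q c l" "s2 \<in> S_lam M k q c l"
    and "expC M k c s2 \<le> B" "B \<le> expC M k c s1" "\<forall>i<k. integrable M (c i)"
  shows "\<exists>s\<in>S_lam M k q c l. expC M k c s = B"
proof (cases "expC M k c s1 = expC M k c s2")
  case True
  then show ?thesis
    using assms(1,3,4) by force
next
  case False
  have routings: "routing M k s1" "routing M k s2"
    using assms(1,2) unfolding S_lam_def by auto
  define t where "t = (B - expC M k c s2) / (expC M k c s1 - expC M k c s2)"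
  have gap: "expC M k c s1 - expC M k c s2 > 0"
    using False assms(3,4) by auto
  then have "0 \<le> t" "t \<le> 1"
    unfolding t_def using assms(3,4) by (auto simp: field_simps)
  have "t * (expC M k c s1 - expC M k c s2) = B - expC M k c s2"
    unfolding t_def using gap by simp
  then have "expC M k c (\<lambda>i x. t * s1 i x + (1 - t) * s2 i x) = B"
    unfolding expC_convex[OF routings assms(5)] by (simp add: algebra_simps)
  with \<open>0 \<le> t\<close> \<open>t \<le> 1\<close> show ?thesis
    using S_lam_convex[OF assms(1,2)] by blast
qed

lemma S_lam_cost_le_budget:
  assumes "k \<ge> 1" "\<forall>i<k. integrable M (q i)" "\<forall>i<k. integrable M (c i)"
    and "routing M k s0" "expC M k c s0 \<le> B" "finite (Lam M k q c)"
    and "\<forall>\<mu>\<in>Lam M k q c. a < \<mu> \<longrightarrow> (\<forall>s\<in>S_lam M k q c \<mu>. expC M k c s < B)"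
  shows "\<exists>s\<in>S_lam M k q c a. expC M k c s \<le> B"
proof -
  have meas: "\<forall>i<k. q i \<in> borel_measurable M" "\<forall>i<k. c i \<in> borel_measurable M"
    using assms(2,3) by auto
  show ?thesis
  proof (cases "\<exists>\<mu>\<in>Lam M k q c. a < \<mu>")
    case True
    define b where "b = Min {\<mu> \<in> Lam M k q c. a < \<mu>}"
    have "b \<in> {\<mu> \<in> Lam M k q c. a < \<mu>}"
      unfolding b_def using True assms(6) by (intro Min_in) auto
    then have b: "b \<in> Lam M k q c" "a < b"
      by auto
    have "b \<le> \<mu>" if "\<mu> \<in> Lam M k q c" "a < \<mu>" for \<mu>
      unfolding b_def using assms(6) that by (intro Min_le) auto
    then have "{a<..<b} \<inter> Lam M k q c = {}"
      by force
    then have "greedy k q c ((a + b) / 2) \<in> S_lam M k q c l" if "l = a \<or> l = b" for l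
      using that b(2) by (intro greedy_in_S_lam_Lam_free[OF assms(1) meas]) auto
    then show ?thesis
      using assms(7) b by (metis less_imp_le)
  next
    case False
    then have beyond: "{a<..} \<inter> Lam M k q c = {}"
      by auto
    then have "greedy k q c (a + 1) \<in> S_lam M k q c a"
      by (intro greedy_in_S_lam_Lam_free[OF assms(1) meas, where b = "a + 2"]) auto
    moreover have "expC M k c (greedy k q c (a + 1)) \<le> expC M k c s0"
      by (rule expC_greedy_le[OF assms(1) meas(1) assms(3) beyond _ assms(4)]) simp
    ultimately show ?thesis
      using assms(5) order_trans by blast
  qed
qed

lemma exists_S_lam_cost_eq_budget:
  assumes "k \<ge> 1" "\<forall>i<k. integrable M (q i)" "\<forall>i<k. integrable M (c i)"
    and "routing M k s0" "expC M k c s0 \<le> B" "finite (Lam M k q c)"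
    and "\<forall>s\<in>S_lam M k q c 0. B < expC M k c s"
  shows "\<exists>l\<ge>0. \<exists>s\<in>S_lam M k q c l. expC M k c s = B"
proof -
  define A where
    "A = {\<mu> \<in> insert 0 (Lam M k q c). 0 \<le> \<mu> \<and> (\<exists>s\<in>S_lam M k q c \<mu>. B \<le> expC M k c s)}"
  define a where "a = Max A"
  have "greedy k q c 0 \<in> S_lam M k q c 0"
    using assms(1-3) by (intro greedy_in_S_lam) auto
  then have "0 \<in> A"
    using assms(7) unfolding A_def by force
  moreover have "finite A"
    using assms(6) unfolding A_def by auto
  ultimately have "a \<in> A" and a_max: "\<And>\<mu>. \<mu> \<in> A \<Longrightarrow> \<mu> \<le> a"
    unfolding a_def by (blast intro: Max_in, simp)
  then obtain s1 where s1: "s1 \<in> S_lam M k q c a" "B \<le> expC M k c s1" and "0 \<le> a"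
    unfolding A_def by auto
  have "\<forall>\<mu>\<in>Lam M k q c. a < \<mu> \<longrightarrow> (\<forall>s\<in>S_lam M k q c \<mu>. expC M k c s < B)"
    using a_max \<open>0 \<le> a\<close> unfolding A_def by force
  then obtain s2 where "s2 \<in> S_lam M k q c a" "expC M k c s2 \<le> B"
    using S_lam_cost_le_budget[OF assms(1-6)] by blast
  then show ?thesis
    using S_lam_intermediate_cost[OF s1(1) _ _ s1(2) assms(3)] \<open>0 \<le> a\<close> by blast
qed

theorem theorem4:
  fixes M :: "'a measure" and k :: nat and q c :: "nat \<Rightarrow> 'a \<Rightarrow> real" and B :: real
  assumes "prob_space M"
    and "k \<ge> 1"
    and "\<forall>i<k. integrable M (q i)"
    and "\<forall>i<k. integrable M (c i)"
    and "\<exists>s. routing M k s \<and> expC M k c s \<le> B"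
    and "finite (Lam M k q c)"
  shows "(\<forall>s\<in>S_lam M k q c 0. expC M k c s \<le> B \<longrightarrow>
            (\<forall>s'. routing M k s' \<and> expC M k c s' \<le> B \<longrightarrow> expQ M k q s' \<le> expQ M k q s))
       \<and> (\<not> (\<exists>s\<in>S_lam M k q c 0. expC M k c s \<le> B) \<longrightarrow>
            (\<exists>l\<ge>0. \<exists>s\<in>S_lam M k q c l. expC M k c s = B)
          \<and> (\<forall>s. (\<exists>l\<ge>0. s \<in> S_lam M k q c l) \<and> expC M k c s = B \<longrightarrow>
               (\<forall>s'. routing M k s' \<and> expC M k c s' \<le> B \<longrightarrow> expQ M k q s' \<le> expQ M k q s)))"
proof -
  have optimal: "expQ M k q s' \<le> expQ M k q s"
    if "s \<in> S_lam M k q c l" "l = 0 \<or> 0 \<le> l \<and> expC M k c s = B"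
      and "routing M k s'" "expC M k c s' \<le> B" for s s' l
  proof (rule S_lam_optimal[OF that(1,3) _ assms(3,4)])
    show "l * expC M k c s' \<le> l * expC M k c s"
      using that(2,4) by (auto intro: mult_left_mono)
  qed
  obtain s0 where s0: "routing M k s0" "expC M k c s0 \<le> B"
    using assms(5) by blast
  have "\<exists>l\<ge>0. \<exists>s\<in>S_lam M k q c l. expC M k c s = B"
    if "\<not> (\<exists>s\<in>S_lam M k q c 0. expC M k c s \<le> B)"
    using that by (intro exists_S_lam_cost_eq_budget[OF assms(2-4) s0 assms(6)]) auto
  then show ?thesis
    using optimal by blast
qed

end
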